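(* Let $A$ be an infinite set, $(x_n^* )_{ n \in \mathbb{N} }$ a sequence in $[-1,1]^A$ and $(f_n)_{ n \in \mathbb{N} }$ a sequence in $FBL(A)$ such that: (1) $f_n \geq 0$ for every $n$; (2) $f_n(x_n^* )=1$ for every $n$; (3) for every finite set $F\subseteq A$ there is $n\in\mathbb{N}$ with $x_n^*|_F=0$. Then for every $\varepsilon>0$ there is a subsequence $(f_{n_k})_{ k \in \mathbb{N} }$ such that $\big\| \sum_{k=1}^{m} f_{n_k} \big\| \geq m - \varepsilon$ for every $m\in \mathbb{N}$.
   Context: For a nonempty set $A$ and $x\in A$, $\delta_x:[-1,1]^A\to[-1,1]$ is $\delta_x(x^* )=x^*(x)$. For $f:[-1,1]^A\to\mathbb{R}$, $$\|f\| = \sup \Big\{\sum_{i = 1}^n | f(x_{i}^{\ast})| : n \in \mathbb{N},\ x_1^{\ast}, \ldots, x_n^{\ast} \in [-1,1]^A,\ \sup_{x \in A} \sum_{i=1}^n |x_i^{\ast}(x)| \leq 1 \Big\}.$$ $FBL(A)$ is the Banach lattice generated by the functions $\delta_x$ ($x\in A$) inside the Banach lattice of all functions $[-1,1]^A\to\mathbb{R}$ with finite norm (pointwise operations and order), equipped with this norm. $[-1,1]^A$ carries the product topology. *)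

theory Defs
  imports "HOL-Analysis.Analysis"
begin

definition cube :: "'a set \<Rightarrow> ('a \<Rightarrow> real) set" where
  "cube A = PiE A (\<lambda>_. {-1..1})"

text \<open>Functions [-1,1]^A to R are represented as functions vanishing off the cube.\<close>
definition delta :: "'a set \<Rightarrow> 'a \<Rightarrow> ('a \<Rightarrow> real) \<Rightarrow> real" where
  "delta A x = (\<lambda>xs. if xs \<in> cube A then xs x else 0)"

definition fbl_norm_set :: "'a set \<Rightarrow> (('a \<Rightarrow> real) \<Rightarrow> real) \<Rightarrow> real set" where
  "fbl_norm_set A f = {(\<Sum>i<n. \<bar>f (xs i)\<bar>) | (n::nat) xs.
      (\<forall>i<n. xs i \<in> cube A) \<and> (\<forall>a\<in>A. (\<Sum>i<n. \<bar>xs i a\<bar>) \<le> 1)}"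

definition fbl_norm :: "'a set \<Rightarrow> (('a \<Rightarrow> real) \<Rightarrow> real) \<Rightarrow> real" where
  "fbl_norm A f = Sup (fbl_norm_set A f)"

definition fin_norm_space :: "'a set \<Rightarrow> (('a \<Rightarrow> real) \<Rightarrow> real) set" where
  "fin_norm_space A = {f. (\<forall>xs. xs \<notin> cube A \<longrightarrow> f xs = 0) \<and> bdd_above (fbl_norm_set A f)}"

text \<open>FBL(A): the smallest closed vector sublattice of H containing all delta functions.\<close>
definition FBL :: "'a set \<Rightarrow> (('a \<Rightarrow> real) \<Rightarrow> real) set" where
  "FBL A = \<Inter> {S. S \<subseteq> fin_norm_space A
     \<and> (\<forall>x\<in>A. delta A x \<in> S)
     \<and> (\<lambda>t. 0) \<in> S
     \<and> (\<forall>f\<in>S. \<forall>g\<in>S. (\<lambda>t. f t + g t) \<in> S)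
     \<and> (\<forall>c::real. \<forall>f\<in>S. (\<lambda>t. c * f t) \<in> S)
     \<and> (\<forall>f\<in>S. \<forall>g\<in>S. (\<lambda>t. max (f t) (g t)) \<in> S)
     \<and> (\<forall>g h. (\<forall>n::nat. g n \<in> S) \<and> h \<in> fin_norm_space A
              \<and> (\<lambda>n. fbl_norm A (\<lambda>t. g n t - h t)) \<longlonglongrightarrow> 0 \<longrightarrow> h \<in> S)}"

end

theory Submission
  imports Defs
begin

text \<open>Every element f of FBL(A) vanishes at the origin and is finitely determined: it is the
  uniform limit on the cube of its truncations t |-> f(t 1_G) along the finite sets G \<subseteq> A.
  Indeed such functions form a closed vector sublattice containing the \<delta>_x, since the FBL norm
  dominates the supremum norm on the cube. Choose indices n_k inductively such that x_{n_k}
  vanishes on the finite sets F_j (j < k) chosen before, where F_k satisfies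
  f_{n_k}(x_{n_k} 1_{F_k}) > 1 - \<epsilon>/2^(k+1). The points y_k = x_{n_k} 1_{F_k} have disjoint
  supports, so y_0, ..., y_{m-1} is admissible in the definition of the norm, and positivity of
  the f_n gives ||\<Sum>_{k<m} f_{n_k}|| \<ge> \<Sum>_{k<m} f_{n_k}(y_k) \<ge> m - \<epsilon>.\<close>

definition truncate :: "'a set \<Rightarrow> 'a set \<Rightarrow> ('a \<Rightarrow> real) \<Rightarrow> ('a \<Rightarrow> real)" where
  "truncate A G t = (\<lambda>a\<in>A. if a \<in> G then t a else 0)"

definition finitely_determined :: "'a set \<Rightarrow> (('a \<Rightarrow> real) \<Rightarrow> real) \<Rightarrow> bool" where
  "finitely_determined A f \<longleftrightarrow>
     uniform_limit (cube A) (\<lambda>G t. f (truncate A G t)) f (finite_subsets_at_top A)"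

lemma abs_le_one_if_in_cube: "t \<in> cube A \<Longrightarrow> a \<in> A \<Longrightarrow> \<bar>t a\<bar> \<le> 1"
  unfolding cube_def by (auto simp: PiE_iff)

lemma truncate_in_cube: "t \<in> cube A \<Longrightarrow> truncate A G t \<in> cube A"
  unfolding cube_def truncate_def by (auto simp: PiE_iff)

lemma origin_in_cube: "(\<lambda>a\<in>A. 0) \<in> cube A"
  unfolding cube_def by (simp add: restrict_PiE_iff)

lemma in_cube_eq_origin:
  assumes "t \<in> cube A" "\<forall>a\<in>A. t a = 0"
  shows "t = (\<lambda>a\<in>A. 0)"
  using assms(1) origin_in_cube[of A] unfolding cube_def by (rule PiE_ext) (simp add: assms(2))

subsection \<open>Functions of finite norm\<close>

lemma fin_norm_space_dominated:
  assumes "f \<in> fin_norm_space A" "g \<in> fin_norm_space A"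
    and "\<And>t. t \<notin> cube A \<Longrightarrow> h t = 0"
    and "\<And>t. t \<in> cube A \<Longrightarrow> \<bar>h t\<bar> \<le> c * \<bar>f t\<bar> + d * \<bar>g t\<bar>" "c \<ge> 0" "d \<ge> 0"
  shows "h \<in> fin_norm_space A"
proof -
  obtain Bf Bg where Bf: "\<forall>z\<in>fbl_norm_set A f. z \<le> Bf" and Bg: "\<forall>z\<in>fbl_norm_set A g. z \<le> Bg"
    using assms(1,2) unfolding fin_norm_space_def bdd_above_def by blast
  have "z \<le> c * Bf + d * Bg" if "z \<in> fbl_norm_set A h" for z
  proof -
    obtain n :: nat and xs where z: "z = (\<Sum>i<n. \<bar>h (xs i)\<bar>)" and xs: "\<forall>i<n. xs i \<in> cube A"
      and admissible: "\<forall>a\<in>A. (\<Sum>i<n. \<bar>xs i a\<bar>) \<le> 1"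
      using \<open>z \<in> fbl_norm_set A h\<close> unfolding fbl_norm_set_def by blast
    have "(\<Sum>i<n. \<bar>f (xs i)\<bar>) \<le> Bf" "(\<Sum>i<n. \<bar>g (xs i)\<bar>) \<le> Bg"
      using Bf Bg xs admissible unfolding fbl_norm_set_def by blast+
    have "z \<le> c * (\<Sum>i<n. \<bar>f (xs i)\<bar>) + d * (\<Sum>i<n. \<bar>g (xs i)\<bar>)"
      unfolding z sum_distrib_left sum.distrib[symmetric] by (rule sum_mono) (use assms(4) xs in auto)
    also have "\<dots> \<le> c * Bf + d * Bg"
      using assms(5,6) \<open>(\<Sum>i<n. \<bar>f (xs i)\<bar>) \<le> Bf\<close> \<open>(\<Sum>i<n. \<bar>g (xs i)\<bar>) \<le> Bg\<close>
      by (intro add_mono mult_left_mono)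
    finally show ?thesis .
  qed
  then show ?thesis
    using assms(3) unfolding fin_norm_space_def bdd_above_def by blast
qed

lemma vanishes_off_cube: "f \<in> fin_norm_space A \<Longrightarrow> t \<notin> cube A \<Longrightarrow> f t = 0"
  unfolding fin_norm_space_def by blast

lemma fin_norm_space_zero: "(\<lambda>t. 0) \<in> fin_norm_space A"
  by (rule fin_norm_space_dominated[of "\<lambda>t. 0" _ "\<lambda>t. 0" _ 0 0])
    (simp_all add: fin_norm_space_def fbl_norm_set_def)

lemma fin_norm_space_add:
  "f \<in> fin_norm_space A \<Longrightarrow> g \<in> fin_norm_space A \<Longrightarrow> (\<lambda>t. f t + g t) \<in> fin_norm_space A"
  by (rule fin_norm_space_dominated[of f _ g _ 1 1]) (auto simp: vanishes_off_cube)

lemma fin_norm_space_diff: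
  "f \<in> fin_norm_space A \<Longrightarrow> g \<in> fin_norm_space A \<Longrightarrow> (\<lambda>t. f t - g t) \<in> fin_norm_space A"
  by (rule fin_norm_space_dominated[of f _ g _ 1 1]) (auto simp: vanishes_off_cube)

lemma fin_norm_space_scale:
  "f \<in> fin_norm_space A \<Longrightarrow> (\<lambda>t. c * f t) \<in> fin_norm_space A"
  by (rule fin_norm_space_dominated[of f _ f _ "\<bar>c\<bar>" 0]) (auto simp: vanishes_off_cube abs_mult)

lemma fin_norm_space_max:
  "f \<in> fin_norm_space A \<Longrightarrow> g \<in> fin_norm_space A \<Longrightarrow> (\<lambda>t. max (f t) (g t)) \<in> fin_norm_space A"
  by (rule fin_norm_space_dominated[of f _ g _ 1 1]) (auto simp: vanishes_off_cube)

lemma fin_norm_space_sum: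
  fixes m :: nat
  assumes "\<And>k. g k \<in> fin_norm_space A"
  shows "(\<lambda>t. \<Sum>k<m. g k t) \<in> fin_norm_space A"
  by (induction m) (simp_all add: assms fin_norm_space_zero fin_norm_space_add)

lemma delta_in_fin_norm_space:
  assumes "x \<in> A"
  shows "delta A x \<in> fin_norm_space A"
proof -
  have "z \<le> 1" if "z \<in> fbl_norm_set A (delta A x)" for z
    using that assms unfolding fbl_norm_set_def delta_def by auto
  then show ?thesis
    unfolding fin_norm_space_def bdd_above_def by (auto simp: delta_def)
qed

lemma sum_le_fbl_norm:
  fixes n :: nat
  assumes "f \<in> fin_norm_space A" "\<forall>i<n. xs i \<in> cube A" "\<forall>a\<in>A. (\<Sum>i<n. \<bar>xs i a\<bar>) \<le> 1"
  shows "(\<Sum>i<n. \<bar>f (xs i)\<bar>) \<le> fbl_norm A f"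
proof -
  have "(\<Sum>i<n. \<bar>f (xs i)\<bar>) \<in> fbl_norm_set A f"
    unfolding fbl_norm_set_def using assms(2,3) by blast
  then show ?thesis
    using assms(1) unfolding fbl_norm_def fin_norm_space_def by (auto intro: cSup_upper)
qed

lemma abs_le_fbl_norm:
  assumes "f \<in> fin_norm_space A" "t \<in> cube A"
  shows "\<bar>f t\<bar> \<le> fbl_norm A f"
  using sum_le_fbl_norm[OF assms(1), of 1 "\<lambda>_. t"] assms(2) by (simp add: abs_le_one_if_in_cube)

lemma uniform_limit_if_fbl_norm_tendsto_zero:
  assumes "\<And>n. (\<lambda>t. g n t - h t) \<in> fin_norm_space A"
    and "(\<lambda>n. fbl_norm A (\<lambda>t. g n t - h t)) \<longlonglongrightarrow> 0"
  shows "uniform_limit (cube A) g h sequentially"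
proof (rule uniform_limitI)
  fix e :: real assume "e > 0"
  with assms(2) have "\<forall>\<^sub>F n in sequentially. fbl_norm A (\<lambda>t. g n t - h t) < e"
    by (simp add: order_tendstoD(2))
  then show "\<forall>\<^sub>F n in sequentially. \<forall>t\<in>cube A. dist (g n t) (h t) < e"
  proof eventually_elim
    case (elim n)
    show ?case
    proof
      fix t assume "t \<in> cube A"
      from abs_le_fbl_norm[OF assms(1) this, of n] elim show "dist (g n t) (h t) < e"
        by (simp add: dist_real_def)
    qed
  qed
qed

lemma sum_abs_le_one_if_disjoint:
  fixes y :: "nat \<Rightarrow> real"
  assumes "\<And>k. k < m \<Longrightarrow> \<bar>y k\<bar> \<le> 1" "\<And>j k. j < k \<Longrightarrow> k < m \<Longrightarrow> y j = 0 \<or> y k = 0"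
  shows "(\<Sum>k<m. \<bar>y k\<bar>) \<le> 1"
  using assms
proof (induction m)
  case (Suc m)
  show ?case
  proof (cases "y m = 0")
    case True
    have "(\<Sum>k<m. \<bar>y k\<bar>) \<le> 1"
      using Suc.prems by (intro Suc.IH) auto
    with True show ?thesis by simp
  next
    case False
    have "y k = 0" if "k < m" for k
      using Suc.prems(2)[of k m] that False by simp
    then have "(\<Sum>k<m. \<bar>y k\<bar>) = 0" by simp
    with Suc.prems(1)[of m] show ?thesis by simp
  qed
qed simp

lemma sum_le_fbl_norm_sum:
  fixes m :: nat
  assumes "\<And>k. g k \<in> fin_norm_space A" "\<And>k t. t \<in> cube A \<Longrightarrow> g k t \<ge> 0"
    and "\<And>k. y k \<in> cube A" "\<And>a. a \<in> A \<Longrightarrow> (\<Sum>k<m. \<bar>y k a\<bar>) \<le> 1"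
  shows "(\<Sum>k<m. g k (y k)) \<le> fbl_norm A (\<lambda>t. \<Sum>k<m. g k t)"
proof -
  have "(\<Sum>i<m. g i (y i)) \<le> (\<Sum>i<m. \<bar>\<Sum>k<m. g k (y i)\<bar>)"
  proof (rule sum_mono)
    fix i assume "i \<in> {..<m}"
    then have "g i (y i) \<le> (\<Sum>k<m. g k (y i))"
      by (intro member_le_sum) (use assms(2,3) in auto)
    then show "g i (y i) \<le> \<bar>\<Sum>k<m. g k (y i)\<bar>" by linarith
  qed
  also have "\<dots> \<le> fbl_norm A (\<lambda>t. \<Sum>k<m. g k t)"
    using sum_le_fbl_norm[OF fin_norm_space_sum[OF assms(1)], of m y] assms(3,4) by auto
  finally show ?thesis .
qed

subsection \<open>Finitely determined functions\<close>

lemma eventually_subset_finite_subsets_at_top: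
  "\<forall>\<^sub>F G in finite_subsets_at_top A. X \<subseteq> G \<and> G \<subseteq> A" if "finite X" "X \<subseteq> A"
  using that unfolding eventually_finite_subsets_at_top by blast

lemma finitely_determinedD:
  assumes "finitely_determined A f" "t \<in> cube A" "e > 0"
  shows "\<exists>F. finite F \<and> F \<subseteq> A \<and> \<bar>f (truncate A F t) - f t\<bar> < e"
proof -
  have "\<forall>\<^sub>F G in finite_subsets_at_top A. \<forall>t\<in>cube A. dist (f (truncate A G t)) (f t) < e"
    using assms(1,3) unfolding finitely_determined_def by (rule uniform_limitD)
  then obtain F where F: "finite F" "F \<subseteq> A"
    and near: "\<forall>Y. finite Y \<and> F \<subseteq> Y \<and> Y \<subseteq> A \<longrightarrow> (\<forall>t\<in>cube A. dist (f (truncate A Y t)) (f t) < e)"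
    unfolding eventually_finite_subsets_at_top by blast
  from near F assms(2) have "dist (f (truncate A F t)) (f t) < e" by blast
  with F show ?thesis by (auto simp: dist_real_def)
qed

lemma finitely_determined_delta:
  assumes "x \<in> A"
  shows "finitely_determined A (delta A x)"
  unfolding finitely_determined_def
proof (rule uniform_limitI)
  fix e :: real assume "e > 0"
  have "\<forall>\<^sub>F G in finite_subsets_at_top A. {x} \<subseteq> G \<and> G \<subseteq> A"
    using assms by (intro eventually_subset_finite_subsets_at_top) auto
  then show "\<forall>\<^sub>F G in finite_subsets_at_top A. \<forall>t\<in>cube A. dist (delta A x (truncate A G t)) (delta A x t) < e"
  proof eventually_elim
    case (elim G)
    have "delta A x (truncate A G t) = delta A x t" if "t \<in> cube A" for t
      using that truncate_in_cube[OF that] elim assms by (simp add: delta_def truncate_def)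
    with \<open>e > 0\<close> show ?case by simp
  qed
qed

lemma finitely_determined_const: "finitely_determined A (\<lambda>t. c)"
  unfolding finitely_determined_def by (rule uniform_limit_const)

lemma finitely_determined_add:
  "finitely_determined A f \<Longrightarrow> finitely_determined A g \<Longrightarrow> finitely_determined A (\<lambda>t. f t + g t)"
  unfolding finitely_determined_def by (rule uniform_limit_add)

lemma finitely_determined_scale:
  "finitely_determined A f \<Longrightarrow> finitely_determined A (\<lambda>t. c * f t)"
  unfolding finitely_determined_def by (rule bounded_linear.uniform_limit[OF bounded_linear_mult_right])

lemma finitely_determined_max:
  assumes "finitely_determined A f" "finitely_determined A g"
  shows "finitely_determined A (\<lambda>t. max (f t) (g t))"
  unfolding finitely_determined_def
proof (rule uniform_limitI)
  fix e :: real assume "e > 0"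
  from uniform_limitD[OF assms(1)[unfolded finitely_determined_def] \<open>e > 0\<close>]
    uniform_limitD[OF assms(2)[unfolded finitely_determined_def] \<open>e > 0\<close>]
  show "\<forall>\<^sub>F G in finite_subsets_at_top A.
      \<forall>t\<in>cube A. dist (max (f (truncate A G t)) (g (truncate A G t))) (max (f t) (g t)) < e"
  proof eventually_elim
    case (elim G)
    show ?case
    proof
      fix t assume "t \<in> cube A"
      with elim have "\<bar>f (truncate A G t) - f t\<bar> < e" "\<bar>g (truncate A G t) - g t\<bar> < e"
        by (simp_all add: dist_real_def)
      then show "dist (max (f (truncate A G t)) (g (truncate A G t))) (max (f t) (g t)) < e"
        by (simp add: dist_real_def max_def abs_less_iff)
    qed
  qed
qed

lemma finitely_determined_uniform_limit:
  assumes "\<And>n. finitely_determined A (g n)" "uniform_limit (cube A) g h sequentially"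
  shows "finitely_determined A h"
  unfolding finitely_determined_def
proof (rule uniform_limitI)
  fix e :: real assume "e > 0"
  then obtain n where n: "\<forall>t\<in>cube A. dist (g n t) (h t) < e / 3"
    using uniform_limitD[OF assms(2), of "e / 3"] by (auto dest: eventually_happens)
  have "\<forall>\<^sub>F G in finite_subsets_at_top A. \<forall>t\<in>cube A. dist (g n (truncate A G t)) (g n t) < e / 3"
    using assms(1)[of n] unfolding finitely_determined_def
    by (rule uniform_limitD) (use \<open>e > 0\<close> in simp)
  then show "\<forall>\<^sub>F G in finite_subsets_at_top A. \<forall>t\<in>cube A. dist (h (truncate A G t)) (h t) < e"
  proof eventually_elim
    case (elim G)
    show ?case
    proof
      fix t assume "t \<in> cube A"
      with n elim truncate_in_cube have "dist (g n (truncate A G t)) (h (truncate A G t)) < e / 3"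
        "dist (g n (truncate A G t)) (g n t) < e / 3" "dist (g n t) (h t) < e / 3" by blast+
      then show "dist (h (truncate A G t)) (h t) < e"
        unfolding dist_real_def by linarith
    qed
  qed
qed

lemma FBL_subset_finitely_determined:
  "FBL A \<subseteq> {f \<in> fin_norm_space A. f (\<lambda>a\<in>A. 0) = 0 \<and> finitely_determined A f}"
  (is "_ \<subseteq> ?S")
  unfolding FBL_def
proof (rule Inter_lower, rule CollectI, intro conjI)
  show "?S \<subseteq> fin_norm_space A" by blast
  show "\<forall>x\<in>A. delta A x \<in> ?S"
    using delta_in_fin_norm_space finitely_determined_delta by (auto simp: delta_def origin_in_cube)
  show "(\<lambda>t. 0) \<in> ?S"
    by (simp add: fin_norm_space_zero finitely_determined_const)
  show "\<forall>f\<in>?S. \<forall>g\<in>?S. (\<lambda>t. f t + g t) \<in> ?S"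
    by (simp add: fin_norm_space_add finitely_determined_add)
  show "\<forall>c. \<forall>f\<in>?S. (\<lambda>t. c * f t) \<in> ?S"
    by (simp add: fin_norm_space_scale finitely_determined_scale)
  show "\<forall>f\<in>?S. \<forall>g\<in>?S. (\<lambda>t. max (f t) (g t)) \<in> ?S"
    by (simp add: fin_norm_space_max finitely_determined_max)
  show "\<forall>g h. (\<forall>n. g n \<in> ?S) \<and> h \<in> fin_norm_space A
      \<and> (\<lambda>n. fbl_norm A (\<lambda>t. g n t - h t)) \<longlonglongrightarrow> 0 \<longrightarrow> h \<in> ?S"
  proof (intro allI impI, elim conjE)
    fix g h assume g: "\<forall>n. g n \<in> ?S" and h: "h \<in> fin_norm_space A"
      and "(\<lambda>n. fbl_norm A (\<lambda>t. g n t - h t)) \<longlonglongrightarrow> 0"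
    then have lim: "uniform_limit (cube A) g h sequentially"
      by (intro uniform_limit_if_fbl_norm_tendsto_zero fin_norm_space_diff) auto
    have "(\<lambda>n. g n (\<lambda>a\<in>A. 0)) \<longlonglongrightarrow> h (\<lambda>a\<in>A. 0)"
      using lim origin_in_cube by (rule tendsto_uniform_limitI)
    then have "h (\<lambda>a\<in>A. 0) = 0"
      using g by (simp add: LIMSEQ_const_iff)
    moreover have "finitely_determined A h"
      using g lim by (blast intro: finitely_determined_uniform_limit)
    ultimately show "h \<in> ?S"
      using h by blast
  qed
qed

subsection \<open>Choice of the subsequence\<close>

lemma vanishing_indices_unbounded:
  fixes x :: "nat \<Rightarrow> 'a \<Rightarrow> real"
  assumes nonzero: "\<And>n. \<exists>a\<in>A. x n a \<noteq> 0"
    and vanish: "\<And>F. finite F \<Longrightarrow> F \<subseteq> A \<Longrightarrow> \<exists>n. \<forall>a\<in>F. x n a = 0"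
    and "finite U" "U \<subseteq> A"
  shows "\<exists>n\<ge>N. \<forall>a\<in>U. x n a = 0"
proof -
  obtain witness where witness: "\<And>n. witness n \<in> A \<and> x n (witness n) \<noteq> 0"
    using nonzero by metis
  have "finite (U \<union> witness ` {..<N})" "U \<union> witness ` {..<N} \<subseteq> A"
    using assms(3,4) witness by auto
  then obtain n where n: "\<forall>a\<in>U \<union> witness ` {..<N}. x n a = 0"
    using vanish by blast
  have "n \<ge> N"
  proof (rule ccontr)
    assume "\<not> n \<ge> N"
    then have "witness n \<in> U \<union> witness ` {..<N}" by simp
    with n witness show False by blast
  qed
  with n show ?thesis by blast
qed

lemma vanishing_subsequence:
  fixes x :: "nat \<Rightarrow> 'a \<Rightarrow> real" and G :: "nat \<Rightarrow> nat \<Rightarrow> 'a set"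
  assumes vanish: "\<And>U N. finite U \<Longrightarrow> U \<subseteq> A \<Longrightarrow> \<exists>n\<ge>N. \<forall>a\<in>U. x n a = 0"
    and G: "\<And>k n. finite (G k n) \<and> G k n \<subseteq> A"
  obtains r where "strict_mono r" "\<And>j k a. j < k \<Longrightarrow> a \<in> G j (r j) \<Longrightarrow> x (r k) a = 0"
proof -
  let ?P = "\<lambda>k (n, U). finite U \<and> U \<subseteq> A \<and> G k n \<subseteq> U"
  let ?Q = "\<lambda>k (n, U) (n', U'). n < n' \<and> (\<forall>a\<in>U. x n' a = 0) \<and> U \<subseteq> U'"
  have "\<exists>s. \<forall>k. ?P k (s k) \<and> ?Q k (s k) (s (Suc k))"
  proof (rule dependent_nat_choice)
    show "\<exists>s. ?P 0 s"
      using G by (intro exI[of _ "(0, G 0 0)"]) auto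
  next
    fix s k assume "?P k s"
    obtain n U where s: "s = (n, U)" by (cases s)
    with \<open>?P k s\<close> have "finite U" "U \<subseteq> A" by auto
    then obtain n' where "n' \<ge> Suc n" "\<forall>a\<in>U. x n' a = 0"
      using vanish by blast
    with \<open>?P k s\<close> G show "\<exists>s'. ?P (Suc k) s' \<and> ?Q k s s'"
      by (intro exI[of _ "(n', U \<union> G (Suc k) n')"]) (auto simp: s)
  qed
  then obtain s where s: "\<And>k. ?P k (s k) \<and> ?Q k (s k) (s (Suc k))" by blast
  define r where "r k = fst (s k)" for k
  define U where "U k = snd (s k)" for k
  have step: "G k (r k) \<subseteq> U k" "r k < r (Suc k)" "\<forall>a\<in>U k. x (r (Suc k)) a = 0"
    "U k \<subseteq> U (Suc k)" for k
    using s[of k] unfolding r_def U_def by (simp_all add: split_beta)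
  show thesis
  proof
    show "strict_mono r"
      unfolding strict_mono_Suc_iff using step(2) by blast
    fix j k a assume "j < k" "a \<in> G j (r j)"
    then obtain k' where k: "k = Suc k'" "j \<le> k'"
      by (cases k) auto
    have "U j \<subseteq> U k'"
      using step(4) k(2) by (rule lift_Suc_mono_le)
    with step(1)[of j] \<open>a \<in> G j (r j)\<close> have "a \<in> U k'" by blast
    with step(3)[of k'] show "x (r k) a = 0"
      unfolding k by blast
  qed
qed

lemma disjoint_truncations_subsequence:
  fixes x :: "nat \<Rightarrow> 'a \<Rightarrow> real" and f :: "nat \<Rightarrow> ('a \<Rightarrow> real) \<Rightarrow> real"
    and e :: "nat \<Rightarrow> real"
  assumes "\<And>n. x n \<in> cube A" "\<And>n. finitely_determined A (f n)"
    and vanish: "\<And>U N. finite U \<Longrightarrow> U \<subseteq> A \<Longrightarrow> \<exists>n\<ge>N. \<forall>a\<in>U. x n a = 0"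
    and "\<And>k. e k > 0"
  obtains r y where "strict_mono r" "\<And>k. y k \<in> cube A"
    "\<And>m a. a \<in> A \<Longrightarrow> (\<Sum>k<m. \<bar>y k a\<bar>) \<le> 1"
    "\<And>k. \<bar>f (r k) (y k) - f (r k) (x (r k))\<bar> < e k"
proof -
  define G where "G k n = (SOME F. finite F \<and> F \<subseteq> A \<and>
    \<bar>f n (truncate A F (x n)) - f n (x n)\<bar> < e k)" for k n
  have G: "finite (G k n) \<and> G k n \<subseteq> A"
    and near: "\<bar>f n (truncate A (G k n) (x n)) - f n (x n)\<bar> < e k" for k n
    using someI_ex[OF finitely_determinedD[OF assms(2)[of n] assms(1)[of n] assms(4)[of k]]]
    unfolding G_def by blast+
  obtain r where "strict_mono r" and disjoint: "\<And>j k a. j < k \<Longrightarrow> a \<in> G j (r j) \<Longrightarrow> x (r k) a = 0"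
    using vanishing_subsequence[where G = G, OF vanish G] by blast
  define y where "y k = truncate A (G k (r k)) (x (r k))" for k
  have y: "y k \<in> cube A" for k
    unfolding y_def by (rule truncate_in_cube[OF assms(1)])
  show thesis
  proof
    show "strict_mono r" "y k \<in> cube A" for k by fact+
    show "\<bar>f (r k) (y k) - f (r k) (x (r k))\<bar> < e k" for k
      unfolding y_def by (rule near)
    show "(\<Sum>k<m. \<bar>y k a\<bar>) \<le> 1" if a: "a \<in> A" for m a
    proof (rule sum_abs_le_one_if_disjoint)
      show "\<bar>y k a\<bar> \<le> 1" for k
        using abs_le_one_if_in_cube[OF y a] .
      show "y j a = 0 \<or> y k a = 0" if "j < k" for j k
        using disjoint[OF that] a by (auto simp: y_def truncate_def)
    qed
  qed
qed

theorem mainTheorem5: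
  fixes A :: "'a set"
    and x :: "nat \<Rightarrow> 'a \<Rightarrow> real"
    and f :: "nat \<Rightarrow> ('a \<Rightarrow> real) \<Rightarrow> real"
  assumes "infinite A"
    and "\<And>n. x n \<in> cube A"
    and "\<And>n. f n \<in> FBL A"
    and "\<And>n t. t \<in> cube A \<Longrightarrow> f n t \<ge> 0"
    and "\<And>n. f n (x n) = 1"
    and "\<And>F. finite F \<Longrightarrow> F \<subseteq> A \<Longrightarrow> \<exists>n. \<forall>a\<in>F. x n a = 0"
  shows "\<forall>\<epsilon>>0. \<exists>r. strict_mono r \<and>
           (\<forall>m. fbl_norm A (\<lambda>t. \<Sum>k<m. f (r k) t) \<ge> real m - \<epsilon>)"
proof (intro allI impI)
  fix \<epsilon> :: real assume "\<epsilon> > 0"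
  have f: "f n \<in> fin_norm_space A" "f n (\<lambda>a\<in>A. 0) = 0" "finitely_determined A (f n)" for n
    using FBL_subset_finitely_determined assms(3) by blast+
  have "x n \<noteq> (\<lambda>a\<in>A. 0)" for n
    using f(2)[of n] assms(5)[of n] by auto
  then have "\<exists>a\<in>A. x n a \<noteq> 0" for n
    using in_cube_eq_origin[OF assms(2)] by blast
  then have vanish: "\<exists>n\<ge>N. \<forall>a\<in>U. x n a = 0" if "finite U" "U \<subseteq> A" for U N
    using vanishing_indices_unbounded assms(6) that by blast
  define e where "e k = \<epsilon> / 2 ^ Suc k" for k
  obtain r y where r: "strict_mono r" and y: "\<And>k. y k \<in> cube A"
    "\<And>m a. a \<in> A \<Longrightarrow> (\<Sum>k<m. \<bar>y k a\<bar>) \<le> 1"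
    and near: "\<And>k. \<bar>f (r k) (y k) - f (r k) (x (r k))\<bar> < e k"
    using disjoint_truncations_subsequence[where f = f and e = e, OF assms(2) f(3) vanish]
      \<open>\<epsilon> > 0\<close> unfolding e_def by auto
  have "real m - \<epsilon> \<le> fbl_norm A (\<lambda>t. \<Sum>k<m. f (r k) t)" for m
  proof -
    have "(\<Sum>k<m. e k) = \<epsilon> - \<epsilon> / 2 ^ m"
      by (induction m) (simp_all add: e_def field_simps)
    then have "real m - \<epsilon> \<le> (\<Sum>k<m. 1 - e k)"
      using \<open>\<epsilon> > 0\<close> by (simp add: sum_subtractf)
    also have "\<dots> \<le> (\<Sum>k<m. f (r k) (y k))"
    proof (rule sum_mono)
      fix k
      show "1 - e k \<le> f (r k) (y k)"
        using near[of k] assms(5)[of "r k"] by (simp add: abs_less_iff)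
    qed
    also have "\<dots> \<le> fbl_norm A (\<lambda>t. \<Sum>k<m. f (r k) t)"
      using f(1) assms(4) y by (rule sum_le_fbl_norm_sum)
    finally show ?thesis .
  qed
  with r show "\<exists>r. strict_mono r \<and> (\<forall>m. fbl_norm A (\<lambda>t. \<Sum>k<m. f (r k) t) \<ge> real m - \<epsilon>)"
    by blast
qed

end
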